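(* For every zero-normalized $\Gamma_{m,n}$-semimodule $\Delta$ one has $G_n(\Delta)=\big(G_m(\widehat{\Delta})\big)^T$, where $T$ denotes transposition (conjugation) of Young diagrams.
   Context: Let $m,n$ be coprime positive integers and $\Gamma=\{am+bn:a,b\in\mathbb{Z}_{\ge0}\}$. A $\Gamma$-semimodule is $\Delta\subset\mathbb{Z}_{\ge0}$ with $\Delta+\Gamma\subset\Delta$; zero-normalized means $\min\Delta=0$. For $p\in\{m,n\}$, a $p$-generator of $\Delta$ is $a\in\Delta$ with $a-p\notin\Delta$; there are exactly $p$ of them. Let $a_1<\dots<a_m$ be the $m$-generators and $b_1<\dots<b_n$ the $n$-generators. Put $g_m(x)=\#(([x,x+n)\cap\mathbb{Z})\setminus\Delta)$ and $g_n(x)=\#(([x,x+m)\cap\mathbb{Z})\setminus\Delta)$. Then $g_m(a_1)\ge\dots\ge g_m(a_m)$ and $g_n(b_1)\ge\dots\ge g_n(b_n)$; $G_m(\Delta)$ is the Young diagram with column heights $g_m(a_1),\dots,g_m(a_m)$ and $G_n(\Delta)$ the Young diagram with column heights $g_n(b_1),\dots,g_n(b_n)$. The dual semimodule is $\Delta^*=\{\varphi\in\mathbb{Z}:\varphi+\Delta\subset\Gamma\}$ and $\widehat{\Delta}=\Delta^*-\min\Delta^*$ is its zero-normalization; equivalently $\widehat\Delta=\max(\mathbb{Z}\setminus\Delta)-(\mathbb{Z}\setminus\Delta)$. *)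

theory Defs
  imports Main
begin

definition Gamma :: "nat \<Rightarrow> nat \<Rightarrow> int set" where
  "Gamma m n = {int a * int m + int b * int n | a b :: nat. True}"

definition semimodule :: "nat \<Rightarrow> nat \<Rightarrow> int set \<Rightarrow> bool" where
  "semimodule m n D \<longleftrightarrow> D \<subseteq> {0..} \<and> (\<forall>x\<in>D. \<forall>g\<in>Gamma m n. x + g \<in> D)"

definition zero_normalized :: "int set \<Rightarrow> bool" where
  "zero_normalized D \<longleftrightarrow> 0 \<in> D \<and> (\<forall>x\<in>D. 0 \<le> x)"

definition generators :: "nat \<Rightarrow> int set \<Rightarrow> int set" where
  "generators p D = {a \<in> D. a - int p \<notin> D}"

definition gapcount :: "nat \<Rightarrow> int set \<Rightarrow> int \<Rightarrow> nat" where
  "gapcount q D x = card ({x..<x + int q} - D)"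

text \<open>Young diagram (as a set of cells (column, row)) whose i-th column (0-indexed)
  has height g(a_(i+1)), where a_1 < ... < a_p are the p-generators and the window
  length is q.\<close>
definition young_diag :: "nat \<Rightarrow> nat \<Rightarrow> int set \<Rightarrow> (nat \<times> nat) set" where
  "young_diag p q D =
     (let s = sorted_list_of_set (generators p D)
      in {(i, j). i < length s \<and> j < gapcount q D (s ! i)})"

definition G_m :: "nat \<Rightarrow> nat \<Rightarrow> int set \<Rightarrow> (nat \<times> nat) set" where
  "G_m m n D = young_diag m n D"

definition G_n :: "nat \<Rightarrow> nat \<Rightarrow> int set \<Rightarrow> (nat \<times> nat) set" where
  "G_n m n D = young_diag n m D"

definition transpose_diag :: "(nat \<times> nat) set \<Rightarrow> (nat \<times> nat) set" where
  "transpose_diag Y = {(j, i) | i j. (i, j) \<in> Y}"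

definition dual :: "nat \<Rightarrow> nat \<Rightarrow> int set \<Rightarrow> int set" where
  "dual m n D = {\<phi>. \<forall>d\<in>D. \<phi> + d \<in> Gamma m n}"

definition dual_hat :: "nat \<Rightarrow> nat \<Rightarrow> int set \<Rightarrow> int set" where
  "dual_hat m n D = (\<lambda>\<phi>. \<phi> - Inf (dual m n D)) ` dual m n D"

end

theory Submission
  imports Defs
begin

(*
  Let F be the largest gap of \<Delta>.  The semigroup \<Gamma> is symmetric: x \<in> \<Gamma> iff mn - m - n - x \<notin> \<Gamma>.
  Hence \<Delta>* = {\<phi>. mn - m - n - \<phi> \<notin> \<Delta>} and hat \<Delta> = {y. F - y \<notin> \<Delta>}, whose p-generators are
  the images of those of \<Delta> under y \<mapsto> F + p - y.  A window [x, x + q) meets every residue class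
  mod q once, and its element in a class is a gap iff the q-generator of that class is \<ge> x + q.
  So g_n(b) counts the m-generators a of \<Delta> with a \<ge> b + m, i.e. the m-generators a' of hat \<Delta>
  with a' + b \<le> F.  Thus the cell (k, l) lies in G_n(\<Delta>) iff b_k + a'_l \<le> F; since the
  reflection is an involution, the same computation for hat \<Delta> yields the transposed condition.
*)

definition frobenius :: "nat \<Rightarrow> nat \<Rightarrow> int" where
  "frobenius m n = int m * int n - int m - int n"

lemma Gamma_memI [intro]: "int a * int m + int b * int n \<in> Gamma m n"
  unfolding Gamma_def by blast

lemma Gamma_nonneg: "x \<in> Gamma m n \<Longrightarrow> 0 \<le> x"
  unfolding Gamma_def by auto

lemma Gamma_zero: "0 \<in> Gamma m n"
  using Gamma_memI[of 0 m 0 n] by simp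

lemma Gamma_left: "int m \<in> Gamma m n"
  using Gamma_memI[of 1 m 0 n] by simp

lemma Gamma_right: "int n \<in> Gamma m n"
  using Gamma_memI[of 0 m 1 n] by simp

lemma Gamma_representation:
  assumes "0 < n" "coprime m n"
  obtains a b :: int where "x = a * int m + b * int n" "0 \<le> a" "a < int n"
proof -
  have "gcd (int m) (int n) = 1" using assms(2) by simp
  then obtain u v where uv: "u * int m + v * int n = 1" using bezout_int by metis
  define r where "r = (x * u) mod int n"
  have xu: "x * u = (x * u) div int n * int n + r" unfolding r_def by simp
  have "x = x * (u * int m + v * int n)" using uv by simp
  also have "\<dots> = (x * u) * int m + (x * v) * int n" by (simp add: algebra_simps)
  also have "\<dots> = r * int m + ((x * u) div int n * int m + x * v) * int n"
    by (subst xu) (simp add: algebra_simps)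
  finally show thesis using assms(1) unfolding r_def by (intro that) auto
qed

lemma mem_Gamma_iff:
  assumes "0 < n" "coprime m n" "0 \<le> a" "a < int n"
  shows "a * int m + b * int n \<in> Gamma m n \<longleftrightarrow> 0 \<le> b"
proof
  assume "a * int m + b * int n \<in> Gamma m n"
  then obtain a' b' :: nat where e: "a * int m + b * int n = int a' * int m + int b' * int n"
    unfolding Gamma_def by auto
  then have e': "(int a' - a) * int m = (b - int b') * int n" by (simp add: algebra_simps)
  then have "int n dvd (int a' - a) * int m" by (metis dvd_triv_right)
  with assms(2) have "int n dvd int a' - a"
    by (simp add: coprime_commute coprime_dvd_mult_left_iff)
  then obtain t where t: "int a' - a = int n * t" by (rule dvdE)
  with assms(4) have "int n * (-1) < int n * t" by simp
  then have "0 \<le> t" using assms(1) mult_less_cancel_left_pos[of "int n" "-1" t] by simp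
  from e' t have "int n * (b - int b') = int n * (int m * t)" by (simp add: algebra_simps)
  then have "b - int b' = int m * t" using assms(1) by simp
  with \<open>0 \<le> t\<close> show "0 \<le> b" using mult_nonneg_nonneg[of "int m" t] by linarith
next
  assume "0 \<le> b"
  then show "a * int m + b * int n \<in> Gamma m n"
    using Gamma_memI[of "nat a" m "nat b" n] assms(3) by simp
qed

lemma Gamma_symmetric:
  assumes "0 < n" "coprime m n"
  shows "x \<in> Gamma m n \<longleftrightarrow> frobenius m n - x \<notin> Gamma m n"
proof -
  obtain a b where ab: "x = a * int m + b * int n" "0 \<le> a" "a < int n"
    using Gamma_representation[OF assms] by blast
  then have "frobenius m n - x = (int n - 1 - a) * int m + (-1 - b) * int n"
    unfolding frobenius_def by (simp add: algebra_simps)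
  with ab show ?thesis
    using mem_Gamma_iff[OF assms, of a b] mem_Gamma_iff[OF assms, of "int n - 1 - a" "-1 - b"]
    by auto
qed

lemma frobenius_not_in_Gamma:
  assumes "0 < n" "coprime m n"
  shows "frobenius m n \<notin> Gamma m n"
  using Gamma_symmetric[OF assms, of "frobenius m n"] Gamma_zero by simp

lemma Gamma_above_frobenius:
  assumes "0 < n" "coprime m n" "frobenius m n < x"
  shows "x \<in> Gamma m n"
  using Gamma_symmetric[OF assms(1,2), of x] Gamma_nonneg[of "frobenius m n - x" m n] assms(3)
  by auto

locale shift_closed =
  fixes q :: nat and X :: "int set"
  assumes q_pos: "0 < q"
    and closed: "x \<in> X \<Longrightarrow> x + int q \<in> X"
    and bdd_below: "\<exists>L. \<forall>x\<in>X. L \<le> x"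
    and cofinite: "\<exists>N. \<forall>x\<ge>N. x \<in> X"
begin

lemma closed_multiple: "x \<in> X \<Longrightarrow> x + int q * int k \<in> X"
proof (induction k)
  case (Suc k)
  then show ?case using closed[of "x + int q * int k"] by (simp add: algebra_simps)
qed simp

lemma finite_generators: "finite (generators q X)"
proof -
  obtain L N where L: "\<forall>x\<in>X. L \<le> x" and N: "\<forall>x\<ge>N. x \<in> X"
    using bdd_below cofinite by blast
  have "generators q X \<subseteq> {L..<N + int q}"
  proof
    fix b assume "b \<in> generators q X"
    then have "b \<in> X" "b - int q \<notin> X" unfolding generators_def by auto
    with L N show "b \<in> {L..<N + int q}" by (auto simp flip: not_le)
  qed
  then show ?thesis by (rule finite_subset) simp
qed

lemma greatest_gap: obtains F where "F \<notin> X" "\<And>s. s \<notin> X \<Longrightarrow> s \<le> F"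
proof -
  obtain L N where L: "\<forall>x\<in>X. L \<le> x" and N: "\<forall>x\<ge>N. x \<in> X"
    using bdd_below cofinite by blast
  define S where "S = {L - 1..} - X"
  have "S \<subseteq> {L - 1..<N}" using N unfolding S_def by (auto simp flip: not_le)
  then have "finite S" by (rule finite_subset) simp
  have "L - 1 \<in> S" using L unfolding S_def by force
  with \<open>finite S\<close> have max: "Max S \<in> S" "\<And>s. s \<in> S \<Longrightarrow> s \<le> Max S"
    by (auto intro: Max_in)
  show thesis
  proof (rule that)
    show "Max S \<notin> X" using max(1) unfolding S_def by simp
  next
    fix s assume "s \<notin> X"
    then have "s \<in> S \<or> s < L - 1" unfolding S_def by auto
    with max \<open>L - 1 \<in> S\<close> show "s \<le> Max S" by fastforce
  qed
qed

lemma generator_le_congruent: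
  assumes b: "b \<in> generators q X" and c: "c \<in> X" "int q dvd b - c"
  shows "b \<le> c"
proof (rule ccontr)
  assume "\<not> b \<le> c"
  obtain k where k: "b - c = int q * k" using c(2) by (rule dvdE)
  with \<open>\<not> b \<le> c\<close> have "0 < int q * k" by simp
  then have "0 < k" by (simp add: zero_less_mult_iff)
  with k have "b - int q = c + int q * int (nat (k - 1))" by (simp add: algebra_simps)
  also have "\<dots> \<in> X" using c(1) by (rule closed_multiple)
  finally show False using b unfolding generators_def by simp
qed

lemma generators_congruent_eq:
  assumes "b \<in> generators q X" "c \<in> generators q X" "int q dvd b - c"
  shows "b = c"
proof -
  have "int q dvd c - b" using assms(3) by (simp add: dvd_diff_commute)
  with assms show ?thesis
    using generator_le_congruent[of b c] generator_le_congruent[of c b]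
    unfolding generators_def by simp
qed

lemma gap_below_generator:
  assumes "y \<notin> X"
  obtains k :: nat where "0 < k" "y + int q * int k \<in> generators q X"
proof -
  obtain N where N: "\<forall>x\<ge>N. x \<in> X" using cofinite by blast
  have "N - y \<le> int q * int (nat (N - y))"
    using q_pos mult_right_mono[of 1 "int q" "int (nat (N - y))"] by linarith
  then have "y + int q * int (nat (N - y)) \<ge> N" by linarith
  then have ex: "y + int q * int (nat (N - y)) \<in> X" using N by blast
  define k where "k = (LEAST k. y + int q * int k \<in> X)"
  have k: "y + int q * int k \<in> X" unfolding k_def using ex by (rule LeastI)
  have "k \<noteq> 0" using k assms by (cases k) auto
  then have "k - 1 < k" by simp
  then have "y + int q * int (k - 1) \<notin> X" unfolding k_def by (rule not_less_Least)
  moreover have "y + int q * int k - int q = y + int q * int (k - 1)"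
    using \<open>k \<noteq> 0\<close> by (simp add: of_nat_diff algebra_simps)
  ultimately have "y + int q * int k - int q \<notin> X" by metis
  with k \<open>k \<noteq> 0\<close> show thesis by (intro that[of k]) (auto simp: generators_def)
qed

lemma gapcount_eq_card_generators:
  "gapcount q X x = card {b \<in> generators q X. x + int q \<le> b}"
proof -
  let ?A = "{b \<in> generators q X. x + int q \<le> b}" and ?B = "{x..<x + int q} - X"
  define f where "f b = x + (b - x) mod int q" for b
  have dvd_f: "int q dvd b - f b" for b
  proof -
    have "b - f b = int q * ((b - x) div int q)"
      using minus_mod_eq_mult_div[of "b - x" "int q"] unfolding f_def by linarith
    then show ?thesis by simp
  qed
  have inj: "inj_on f ?A"
  proof (rule inj_onI)
    fix b c assume "b \<in> ?A" "c \<in> ?A" "f b = f c"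
    moreover have "int q dvd b - c"
      using dvd_diff[OF dvd_f[of b] dvd_f[of c]] \<open>f b = f c\<close> by simp
    ultimately show "b = c" using generators_congruent_eq by blast
  qed
  have "f ` ?A = ?B"
  proof
    show "f ` ?A \<subseteq> ?B"
    proof
      fix y assume "y \<in> f ` ?A"
      then obtain b where b: "b \<in> ?A" and y: "y = f b" by blast
      have window: "y \<in> {x..<x + int q}" using q_pos unfolding y f_def by simp
      moreover have "y \<notin> X"
        using generator_le_congruent[of b y] b window dvd_f[of b] unfolding y by force
      ultimately show "y \<in> ?B" by blast
    qed
  next
    show "?B \<subseteq> f ` ?A"
    proof
      fix y assume y: "y \<in> ?B"
      then obtain k :: nat where k: "0 < k" "y + int q * int k \<in> generators q X"
        using gap_below_generator by blast
      have "(y + int q * int k - x) mod int q = (y - x + int q * int k) mod int q"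
        by (simp add: algebra_simps)
      also have "\<dots> = y - x" using y by (simp only: mod_mult_self2) simp
      finally have "f (y + int q * int k) = y" unfolding f_def by simp
      moreover have "x + int q \<le> y + int q * int k"
      proof -
        have "int q \<le> int q * int k" using k(1) mult_left_mono[of 1 "int k" "int q"] by simp
        moreover have "x \<le> y" using y by simp
        ultimately show ?thesis by linarith
      qed
      ultimately show "y \<in> f ` ?A" using k(2) by (intro image_eqI[of _ _ "y + int q * int k"]) auto
    qed
  qed
  then show ?thesis unfolding gapcount_def using card_image[OF inj] by simp
qed

end

lemma less_card_iff_mem_if_downward_closed:
  fixes I :: "nat set"
  assumes "finite I" and down: "\<And>i j. i \<in> I \<Longrightarrow> j < i \<Longrightarrow> j \<in> I"
  shows "k < card I \<longleftrightarrow> k \<in> I"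
proof
  assume "k < card I"
  show "k \<in> I"
  proof (rule ccontr)
    assume "k \<notin> I"
    then have "I \<subseteq> {..<k}" using down by (metis lessThan_iff linorder_neqE_nat subsetI)
    then have "card I \<le> k" using card_mono[of "{..<k}" I] by simp
    with \<open>k < card I\<close> show False by simp
  qed
next
  assume "k \<in> I"
  then have "{..k} \<subseteq> I" using down by (auto simp: le_less)
  then have "card {..k} \<le> card I" by (rule card_mono[OF assms(1)])
  then show "k < card I" by simp
qed

lemma less_card_le_iff_nth_sorted_list_of_set:
  fixes S :: "'a::linorder set"
  assumes "finite S"
  shows "k < card {x \<in> S. x \<le> t} \<longleftrightarrow> k < card S \<and> sorted_list_of_set S ! k \<le> t"
proof -
  define s where "s = sorted_list_of_set S"
  define I where "I = {i. i < length s \<and> s ! i \<le> t}"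
  have "S = set s" using assms unfolding s_def by simp
  moreover have "{x \<in> set s. x \<le> t} = (!) s ` I"
    unfolding I_def by (auto simp: in_set_conv_nth)
  ultimately have "{x \<in> S. x \<le> t} = (!) s ` I" by simp
  moreover have "inj_on ((!) s) I"
    using assms unfolding s_def I_def by (auto intro!: inj_onI simp: nth_eq_iff_index_eq)
  ultimately have "card {x \<in> S. x \<le> t} = card I" by (simp add: card_image)
  moreover have "k < card I \<longleftrightarrow> k \<in> I"
  proof (rule less_card_iff_mem_if_downward_closed)
    show "finite I" unfolding I_def by simp
    show "j \<in> I" if "i \<in> I" "j < i" for i j
      using that sorted_nth_mono[of s j i] assms unfolding I_def s_def by force
  qed
  ultimately show ?thesis using assms unfolding I_def s_def by simp
qed

definition reflect_gaps :: "int \<Rightarrow> int set \<Rightarrow> int set" where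
  "reflect_gaps F X = {y. F - y \<notin> X}"

lemma reflect_gaps_reflect_gaps [simp]: "reflect_gaps F (reflect_gaps F X) = X"
  unfolding reflect_gaps_def by simp

lemma generators_reflect_gaps:
  "generators p (reflect_gaps F X) = (\<lambda>b. F + int p - b) ` generators p X"
proof -
  have "x \<in> generators p (reflect_gaps F X) \<longleftrightarrow> F + int p - x \<in> generators p X" for x
    unfolding generators_def reflect_gaps_def by (auto simp: algebra_simps)
  moreover have "x \<in> (\<lambda>b. F + int p - b) ` generators p X \<longleftrightarrow> F + int p - x \<in> generators p X"
    for x by (auto intro: image_eqI[where x = "F + int p - x"])
  ultimately show ?thesis by blast
qed

lemma shift_closed_reflect_gaps:
  assumes "shift_closed q X"
  shows "shift_closed q (reflect_gaps F X)"
proof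
  interpret shift_closed q X by (fact assms)
  show "0 < q" by (fact q_pos)
  show "x + int q \<in> reflect_gaps F X" if "x \<in> reflect_gaps F X" for x
    using that closed[of "F - (x + int q)"] unfolding reflect_gaps_def by auto
  obtain L N where L: "\<forall>x\<in>X. L \<le> x" and N: "\<forall>x\<ge>N. x \<in> X"
    using bdd_below cofinite by blast
  have "F - N \<le> x" if "x \<in> reflect_gaps F X" for x
    using that N unfolding reflect_gaps_def by (auto simp flip: not_less)
  then show "\<exists>L. \<forall>x\<in>reflect_gaps F X. L \<le> x" by blast
  from L show "\<exists>N. \<forall>x\<ge>N. x \<in> reflect_gaps F X"
    unfolding reflect_gaps_def by (intro exI[of _ "F - L + 1"]) force
qed

lemma (in shift_closed) gapcount_eq_card_reflected_generators:
  "gapcount q X t = card {e \<in> generators q (reflect_gaps F X). e \<le> F - t}"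
proof -
  have "{e \<in> generators q (reflect_gaps F X). e \<le> F - t} =
        (\<lambda>b. F + int q - b) ` {b \<in> generators q X. t + int q \<le> b}"
    unfolding generators_reflect_gaps by auto
  moreover have "inj (\<lambda>b. F + int q - b)" by (rule injI) simp
  ultimately show ?thesis
    by (simp add: gapcount_eq_card_generators card_image inj_on_subset[of _ UNIV])
qed

lemma young_diag_eq_reflect_gaps:
  assumes "shift_closed p X" "shift_closed q X"
  shows "young_diag p q X =
    {(k, l). k < card (generators p X) \<and> l < card (generators q (reflect_gaps F X)) \<and>
       sorted_list_of_set (generators p X) ! k
         + sorted_list_of_set (generators q (reflect_gaps F X)) ! l \<le> F}"
proof -
  interpret shift_closed q X by (fact assms(2))
  have "finite (generators q (reflect_gaps F X))"
    using shift_closed_reflect_gaps[OF assms(2)] by (rule shift_closed.finite_generators)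
  then have "l < gapcount q X b \<longleftrightarrow>
      l < card (generators q (reflect_gaps F X)) \<and>
      b + sorted_list_of_set (generators q (reflect_gaps F X)) ! l \<le> F" for b l
    unfolding gapcount_eq_card_reflected_generators[of b F]
      less_card_le_iff_nth_sorted_list_of_set[OF \<open>finite _\<close>] by auto
  then show ?thesis unfolding young_diag_def Let_def by auto
qed

lemma semimodule_shift_closed:
  assumes "0 < n" "coprime m n" "semimodule m n D" "D \<noteq> {}" "0 < p" "int p \<in> Gamma m n"
  shows "shift_closed p D"
proof
  have D: "D \<subseteq> {0..}" "\<And>x g. x \<in> D \<Longrightarrow> g \<in> Gamma m n \<Longrightarrow> x + g \<in> D"
    using assms(3) unfolding semimodule_def by auto
  show "0 < p" by (fact assms(5))
  show "x + int p \<in> D" if "x \<in> D" for x using D(2)[OF that assms(6)] .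
  show "\<exists>L. \<forall>x\<in>D. L \<le> x" using D(1) by auto
  obtain x0 where "x0 \<in> D" using assms(4) by blast
  have "x \<in> D" if "x0 + frobenius m n < x" for x
    using D(2)[OF \<open>x0 \<in> D\<close> Gamma_above_frobenius[OF assms(1,2), of "x - x0"]] that by simp
  then show "\<exists>N. \<forall>x\<ge>N. x \<in> D" by (intro exI[of _ "x0 + frobenius m n + 1"]) auto
qed

lemma dual_eq_reflect_gaps:
  assumes "0 < n" "coprime m n" "semimodule m n D"
  shows "dual m n D = reflect_gaps (frobenius m n) D"
proof -
  have D: "\<And>x g. x \<in> D \<Longrightarrow> g \<in> Gamma m n \<Longrightarrow> x + g \<in> D"
    using assms(3) unfolding semimodule_def by auto
  have "(\<forall>d\<in>D. \<phi> + d \<in> Gamma m n) \<longleftrightarrow> frobenius m n - \<phi> \<notin> D" for \<phi>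
  proof
    assume "\<forall>d\<in>D. \<phi> + d \<in> Gamma m n"
    then have "frobenius m n - \<phi> \<in> D \<Longrightarrow> \<phi> + (frobenius m n - \<phi>) \<in> Gamma m n" by blast
    then show "frobenius m n - \<phi> \<notin> D" using frobenius_not_in_Gamma[OF assms(1,2)] by auto
  next
    assume gap: "frobenius m n - \<phi> \<notin> D"
    show "\<forall>d\<in>D. \<phi> + d \<in> Gamma m n"
    proof (rule ballI, rule ccontr)
      fix d assume "d \<in> D" "\<phi> + d \<notin> Gamma m n"
      then have "frobenius m n - (\<phi> + d) \<in> Gamma m n"
        using Gamma_symmetric[OF assms(1,2), of "\<phi> + d"] by simp
      with \<open>d \<in> D\<close> have "d + (frobenius m n - (\<phi> + d)) \<in> D" by (rule D)
      with gap show False by simp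
    qed
  qed
  then show ?thesis unfolding dual_def reflect_gaps_def by simp
qed

lemma dual_hat_eq_reflect_gaps:
  assumes "0 < n" "coprime m n" "semimodule m n D"
    and "F \<notin> D" "\<And>s. s \<notin> D \<Longrightarrow> s \<le> F"
  shows "dual_hat m n D = reflect_gaps F D"
proof -
  let ?K = "frobenius m n"
  have "Inf (reflect_gaps ?K D) = ?K - F"
  proof (rule cInf_eq_minimum)
    show "?K - F \<in> reflect_gaps ?K D" using assms(4) by (simp add: reflect_gaps_def)
    show "?K - F \<le> \<phi>" if "\<phi> \<in> reflect_gaps ?K D" for \<phi>
      using that assms(5)[of "?K - \<phi>"] by (simp add: reflect_gaps_def)
  qed
  moreover have "(\<lambda>\<phi>. \<phi> - (?K - F)) ` reflect_gaps ?K D = reflect_gaps F D"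
  proof -
    have "y \<in> (\<lambda>\<phi>. \<phi> - (?K - F)) ` reflect_gaps ?K D \<longleftrightarrow> y + (?K - F) \<in> reflect_gaps ?K D"
      for y by (auto intro: image_eqI[where x = "y + (?K - F)"])
    then show ?thesis unfolding reflect_gaps_def by auto
  qed
  ultimately show ?thesis
    unfolding dual_hat_def dual_eq_reflect_gaps[OF assms(1-3)] by simp
qed

lemma transpose_diag_Collect: "transpose_diag {(i, j). P i j} = {(j, i). P i j}"
  unfolding transpose_diag_def by auto

theorem mainTheorem5:
  fixes m n :: nat and D :: "int set"
  assumes "0 < m" and "0 < n" and "coprime m n"
    and "semimodule m n D" and "zero_normalized D"
  shows "G_n m n D = transpose_diag (G_m m n (dual_hat m n D))"
proof -
  have "D \<noteq> {}" using assms(5) unfolding zero_normalized_def by blast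
  then have Dm: "shift_closed m D" and Dn: "shift_closed n D"
    using semimodule_shift_closed[OF assms(2-4)] assms(1,2) Gamma_left Gamma_right by auto
  obtain F where "F \<notin> D" "\<And>s. s \<notin> D \<Longrightarrow> s \<le> F"
    using shift_closed.greatest_gap[OF Dm] by blast
  then have hat: "dual_hat m n D = reflect_gaps F D"
    using dual_hat_eq_reflect_gaps[OF assms(2-4)] by blast
  have "shift_closed m (reflect_gaps F D)" "shift_closed n (reflect_gaps F D)"
    using Dm Dn by (auto intro: shift_closed_reflect_gaps)
  from young_diag_eq_reflect_gaps[OF this, of F]
  have "transpose_diag (G_m m n (dual_hat m n D)) =
    {(k, l). l < card (generators m (reflect_gaps F D)) \<and> k < card (generators n D) \<and>
       sorted_list_of_set (generators m (reflect_gaps F D)) ! l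
         + sorted_list_of_set (generators n D) ! k \<le> F}"
    unfolding G_m_def hat by (simp add: transpose_diag_Collect)
  moreover have "G_n m n D =
    {(k, l). k < card (generators n D) \<and> l < card (generators m (reflect_gaps F D)) \<and>
       sorted_list_of_set (generators n D) ! k
         + sorted_list_of_set (generators m (reflect_gaps F D)) ! l \<le> F}"
    unfolding G_n_def by (rule young_diag_eq_reflect_gaps[OF Dn Dm])
  ultimately show ?thesis by (auto simp: add.commute)
qed

end
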